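(* For any idempotent $e$ of a semigroup $S$, $$\big(\sqrt[\infty]{H_e}\cdot H_e\big)\cup\big(H_e\cdot \sqrt[\infty]{H_e}\big)\subseteq H_e .$$
   Context: For a subset $A$ of a semigroup $S$, $\sqrt[\infty]{A}=\{x\in S:\exists n\in\mathbb N\ (x^n\in A)\}$. $S^1=S\cup\{1\}$ with $1$ an adjoined identity. For $a\in S$, $H_a=\{x\in S: xS^1=aS^1 \text{ and } S^1x=S^1a\}$ is the $\mathcal H$-class of $a$; for an idempotent $e$, $H_e$ is the maximal subgroup of $S$ containing $e$. For sets $A,B\subseteq S$, $A\cdot B=\{ab:a\in A,b\in B\}$. *)

theory Defs
  imports Main
begin

text \<open>Semigroups are modelled by the type class semigroup_mult: the semigroup S is the
whole type. Powers x^n for n >= 1: spow x k = x^(k+1).\<close>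

fun spow :: "'a::semigroup_mult \<Rightarrow> nat \<Rightarrow> 'a" where
  "spow x 0 = x"
| "spow x (Suc k) = spow x k * x"

definition right_ideal1 :: "'a::semigroup_mult \<Rightarrow> 'a set" where
  "right_ideal1 a = insert a {a * s | s. True}"

definition left_ideal1 :: "'a::semigroup_mult \<Rightarrow> 'a set" where
  "left_ideal1 a = insert a {s * a | s. True}"

definition Hclass :: "'a::semigroup_mult \<Rightarrow> 'a set" where
  "Hclass a = {x. right_ideal1 x = right_ideal1 a \<and> left_ideal1 x = left_ideal1 a}"

definition root_inf :: "'a::semigroup_mult set \<Rightarrow> 'a set" where
  "root_inf A = {x. \<exists>n::nat. n \<ge> 1 \<and> spow x (n - 1) \<in> A}"

definition set_prod :: "'a::semigroup_mult set \<Rightarrow> 'a set \<Rightarrow> 'a set" where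
  "set_prod A B = {a * b | a b. a \<in> A \<and> b \<in> B}"

end

theory Submission
  imports Defs
begin

text \<open>For an idempotent e, H_e consists of the y with e y = y = y e having a left and a right
  e-inverse; so H_e is closed under products, and any x commuting with some g \<in> H_e commutes
  with e. If x^n \<in> H_e, then (x e)^n = x^n e = x^n \<in> H_e, which forces x e \<in> H_e.
  Finally x h = (x e) h and h x = h (e x) = h (x e) are products inside H_e.\<close>

lemma spow_commute: "spow x k * x = x * (spow x k :: 'a::semigroup_mult)"
  by (induction k) (auto simp: mult.assoc)

lemma spow_Suc_left: "spow x (Suc k) = x * (spow x k :: 'a::semigroup_mult)"
  by (simp add: spow_commute)

lemma spow_mult_commuting_idem:
  fixes x e :: "'a::semigroup_mult"
  assumes "e * e = e" and "x * e = e * x"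
  shows "spow (x * e) k = spow x k * e"
proof (induction k)
  case (Suc k)
  have "spow x k * e * (x * e) = spow x k * x * (e * e)"
    using assms(2) by (metis mult.assoc)
  with Suc show ?case using assms(1) by simp
qed simp

lemma right_ideal1_subset_iff: "right_ideal1 a \<subseteq> right_ideal1 b \<longleftrightarrow> a \<in> right_ideal1 b"
  by (auto simp: right_ideal1_def mult.assoc)

lemma left_ideal1_subset_iff: "left_ideal1 a \<subseteq> left_ideal1 b \<longleftrightarrow> a \<in> left_ideal1 b"
  by (auto simp: left_ideal1_def mult.assoc[symmetric])

lemma mem_right_ideal1_idem:
  fixes e a :: "'a::semigroup_mult"
  assumes "e * e = e"
  shows "a \<in> right_ideal1 e \<longleftrightarrow> e * a = a"
  using assms by (auto simp: right_ideal1_def mult.assoc[symmetric]) metis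

lemma mem_left_ideal1_idem:
  fixes e a :: "'a::semigroup_mult"
  assumes "e * e = e"
  shows "a \<in> left_ideal1 e \<longleftrightarrow> a * e = a"
  using assms by (auto simp: left_ideal1_def mult.assoc) metis

lemma Hclass_idem_iff:
  fixes e y :: "'a::semigroup_mult"
  assumes "e * e = e"
  shows "y \<in> Hclass e \<longleftrightarrow> e * y = y \<and> y * e = y \<and> (\<exists>a. a * y = e) \<and> (\<exists>b. y * b = e)"
proof -
  have "e \<in> right_ideal1 y \<longleftrightarrow> (\<exists>b. y * b = e)" if "e * y = y"
    using that assms by (auto simp: right_ideal1_def)
  moreover have "e \<in> left_ideal1 y \<longleftrightarrow> (\<exists>a. a * y = e)" if "y * e = y"
    using that assms by (auto simp: left_ideal1_def)
  ultimately show ?thesis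
    unfolding Hclass_def set_eq_subset right_ideal1_subset_iff left_ideal1_subset_iff
    using mem_right_ideal1_idem[OF assms] mem_left_ideal1_idem[OF assms]
    by (auto simp: right_ideal1_def left_ideal1_def)
qed

lemma Hclass_idem_inverse:
  fixes e g :: "'a::semigroup_mult"
  assumes "e * e = e" and "g \<in> Hclass e"
  obtains u where "u * g = e" and "g * u = e"
proof -
  obtain a b where eg: "e * g = g" and ge: "g * e = g" and a: "a * g = e" and b: "g * b = e"
    using assms Hclass_idem_iff by blast
  \<comment> \<open>a need not satisfy a e = a, but a e = a g b = e b is a two-sided inverse\<close>
  have "a * e = e * b" using a b by (metis mult.assoc)
  then have "a * e * g = e" and "g * (a * e) = e"
    using a eg ge b by (metis mult.assoc)+
  then show thesis ..
qed

lemma Hclass_idem_mult: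
  fixes e g h :: "'a::semigroup_mult"
  assumes e: "e * e = e" and g: "g \<in> Hclass e" and h: "h \<in> Hclass e"
  shows "g * h \<in> Hclass e"
proof -
  obtain u where ug: "u * g = e" and gu: "g * u = e" using Hclass_idem_inverse[OF e g] .
  obtain v where vh: "v * h = e" and hv: "h * v = e" using Hclass_idem_inverse[OF e h] .
  have "e * g = g" "h * e = h" using e g h Hclass_idem_iff by blast+
  then have "v * u * (g * h) = e" "g * h * (v * u) = e"
    using ug gu vh hv by (metis mult.assoc)+
  moreover have "e * (g * h) = g * h" "g * h * e = g * h"
    using \<open>e * g = g\<close> \<open>h * e = h\<close> by (simp_all add: mult.assoc[symmetric] mult.assoc)
  ultimately show ?thesis using Hclass_idem_iff[OF e] by blast
qed

lemma commute_Hclass_idem: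
  fixes e g x :: "'a::semigroup_mult"
  assumes e: "e * e = e" and g: "g \<in> Hclass e" and xg: "x * g = g * x"
  shows "x * e = e * x"
proof -
  obtain u where ug: "u * g = e" and gu: "g * u = e" using Hclass_idem_inverse[OF e g] .
  have eg: "e * g = g" and ge: "g * e = g" using e g Hclass_idem_iff by blast+
  have "e * (x * e) = x * e"
  proof -
    have "x * e = g * (x * u)" using gu xg by (metis mult.assoc)
    then show ?thesis using eg by (metis mult.assoc)
  qed
  moreover have "e * x * e = e * x"
  proof -
    have "e * x = (u * x) * g" using ug xg by (metis mult.assoc)
    then show ?thesis using ge by (metis mult.assoc)
  qed
  ultimately show ?thesis by (metis mult.assoc)
qed

lemma Hclass_idem_if_spow:
  fixes e y :: "'a::semigroup_mult"
  assumes e: "e * e = e" and ey: "e * y = y" and ye: "y * e = y"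
    and pow: "spow y k \<in> Hclass e"
  shows "y \<in> Hclass e"
proof (cases k)
  case (Suc m)
  obtain u where "u * spow y k = e" and "spow y k * u = e"
    using Hclass_idem_inverse[OF e pow] .
  then have "(u * spow y m) * y = e" and "y * (spow y m * u) = e"
    using Suc spow_Suc_left[of y m] spow_commute[of y m] by (simp_all add: mult.assoc)
  with ey ye show ?thesis using Hclass_idem_iff[OF e] by blast
qed (use pow in simp)

lemma root_inf_Hclass_idem:
  fixes e x :: "'a::semigroup_mult"
  assumes e: "e * e = e" and x: "x \<in> root_inf (Hclass e)"
  shows "x * e = e * x" and "x * e \<in> Hclass e"
proof -
  obtain k where pow: "spow x k \<in> Hclass e" using x by (auto simp: root_inf_def)
  then show xe: "x * e = e * x"
    using commute_Hclass_idem[OF e] spow_commute by metis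
  have "spow (x * e) k = spow x k"
    using spow_mult_commuting_idem[OF e xe] pow Hclass_idem_iff[OF e] by auto
  moreover have "e * (x * e) = x * e" "x * e * e = x * e"
    using xe e by (metis mult.assoc)+
  ultimately show "x * e \<in> Hclass e"
    using Hclass_idem_if_spow[OF e] pow by metis
qed

theorem lemma3p1:
  fixes e :: "'a::semigroup_mult"
  assumes "e * e = e"
  shows "set_prod (root_inf (Hclass e)) (Hclass e) \<union> set_prod (Hclass e) (root_inf (Hclass e))
           \<subseteq> Hclass e"
proof -
  have "x * h \<in> Hclass e \<and> h * x \<in> Hclass e"
    if x: "x \<in> root_inf (Hclass e)" and h: "h \<in> Hclass e" for x h
  proof -
    have "e * h = h" "h * e = h" using assms h Hclass_idem_iff by blast+
    then have "x * h = (x * e) * h" "h * x = h * (x * e)"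
      using root_inf_Hclass_idem(1)[OF assms x] by (metis mult.assoc)+
    then show ?thesis
      using Hclass_idem_mult[OF assms] root_inf_Hclass_idem(2)[OF assms x] h by simp
  qed
  then show ?thesis by (auto simp: set_prod_def)
qed

end
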